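(* Every (unbounded-fanin) formula computing $\textsc{parity}_n(x)=x_1\oplus\cdots\oplus x_n$ has $\Omega(n^2)$ gates, and likewise every formula computing $\textsc{majority}_n$ (which is 1 iff more than half of the $n$ input bits are 1) has $\Omega(n^2)$ gates.
   Context: A formula on input variables $x_1,\dots,x_n$ is a rooted tree whose leaves are labeled by input variables (the same variable may label many leaves) and whose internal vertices are \textsc{not} gates (fanin 1) or unbounded-fanin \textsc{and}/\textsc{or} gates; its number of gates is the number of \textsc{and} and \textsc{or} gates. *)

theory Defs
  imports Complex_Main
begin

datatype formula = Var nat | Neg formula | AndG "formula list" | OrG "formula list"

fun eval :: "(nat \<Rightarrow> bool) \<Rightarrow> formula \<Rightarrow> bool" where
  "eval x (Var i) = x i"
| "eval x (Neg f) = (\<not> eval x f)"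
| "eval x (AndG fs) = (\<forall>f \<in> set fs. eval x f)"
| "eval x (OrG fs) = (\<exists>f \<in> set fs. eval x f)"

fun vars :: "formula \<Rightarrow> nat set" where
  "vars (Var i) = {i}"
| "vars (Neg f) = vars f"
| "vars (AndG fs) = (\<Union>f \<in> set fs. vars f)"
| "vars (OrG fs) = (\<Union>f \<in> set fs. vars f)"

fun gates :: "formula \<Rightarrow> nat" where
  "gates (Var i) = 0"
| "gates (Neg f) = gates f"
| "gates (AndG fs) = Suc (sum_list (map gates fs))"
| "gates (OrG fs) = Suc (sum_list (map gates fs))"

text \<open>Inputs x_1..x_n are represented by variable indices 0..n-1.\<close>
definition computes :: "nat \<Rightarrow> ((nat \<Rightarrow> bool) \<Rightarrow> bool) \<Rightarrow> formula \<Rightarrow> bool" where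
  "computes n g F \<longleftrightarrow> vars F \<subseteq> {..<n} \<and> (\<forall>x. eval x F = g x)"

definition parity :: "nat \<Rightarrow> (nat \<Rightarrow> bool) \<Rightarrow> bool" where
  "parity n x = odd (card {i. i < n \<and> x i})"

definition majority :: "nat \<Rightarrow> (nat \<Rightarrow> bool) \<Rightarrow> bool" where
  "majority n x = (2 * card {i. i < n \<and> x i} > n)"

end

theory Submission
  imports Defs
begin

(* The proof combines Khrapchenko's method with random-restriction style counting.
   1. Cost measure: kcost F counts, for every AND/OR gate, the distinct variables among its literal
      children (plus one if F is itself a literal).  Khrapchenko's theorem for this measure says that
      if F is constant on A and takes the other value on B, then edges(A,B)^2 <= |A| |B| kcost F,
      where edges counts pairs at Hamming distance one.  It is proved by structural induction,
      splitting A according to which child of a gate is responsible for its value.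
   2. For PARITY and MAJORITY on m variables this yields kcost F >= m^2/4.
   3. A literal child on x_i kills its parent gate under one of x_i := True, x_i := False, so one of the
      2m restrictions of single variables kills at least kcost F/(2m) >= m/8 - O(1) gates.
   4. Also fixing a second variable to the opposite value maps PARITY and MAJORITY on m variables to
      (possibly negated) PARITY and MAJORITY on m - 2 variables, so induction on m gives at least
      m^2/32 - m gates; the theorem follows with constant 1/64 for n >= 64. *)

fun is_literal :: "formula \<Rightarrow> bool" where
  "is_literal (Var i) = True"
| "is_literal (Neg f) = is_literal f"
| "is_literal _ = False"

fun lit_var :: "formula \<Rightarrow> nat" where
  "lit_var (Var i) = i"
| "lit_var (Neg f) = lit_var f"
| "lit_var _ = 0"

fun lit_pol :: "formula \<Rightarrow> bool" where
  "lit_pol (Var i) = True"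
| "lit_pol (Neg f) = (\<not> lit_pol f)"
| "lit_pol _ = True"

lemma eval_literal: "is_literal f \<Longrightarrow> eval x f = (x (lit_var f) = lit_pol f)"
  by (induction f) auto

lemma lit_var_in_vars: "is_literal f \<Longrightarrow> lit_var f \<in> vars f"
  by (induction f) auto

abbreviation flip :: "(nat \<Rightarrow> bool) \<Rightarrow> nat \<Rightarrow> nat \<Rightarrow> bool" where
  "flip a i \<equiv> a(i := \<not> a i)"

lemma literal_flip:
  assumes "is_literal f" "eval (flip a i) f \<noteq> eval a f"
  shows "i = lit_var f"
  using assms eval_literal[of f] by (cases "i = lit_var f") auto

(* OR and AND gates treated uniformly: gate b is absorbed by a child of value b
   (b = True: OR, b = False: AND). Most inductions below then need a single gate case. *)
definition gate :: "bool \<Rightarrow> formula list \<Rightarrow> formula" where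
  "gate b fs = (if b then OrG fs else AndG fs)"

lemma eval_gate_eq: "eval x (gate b fs) = b \<longleftrightarrow> (\<exists>f\<in>set fs. eval x f = b)"
  by (cases b) (auto simp: gate_def)

lemma eval_gate: "eval x (gate b fs) = (if b then \<exists>f\<in>set fs. eval x f else \<forall>f\<in>set fs. eval x f)"
  by (cases b) (auto simp: gate_def)

lemma vars_gate [simp]: "vars (gate b fs) = (\<Union>f\<in>set fs. vars f)"
  and gates_gate [simp]: "gates (gate b fs) = Suc (sum_list (map gates fs))"
  and is_literal_gate [simp]: "\<not> is_literal (gate b fs)"
  by (cases b; simp add: gate_def)+

lemma formula_gate_induct [case_names Var Neg Gate]:
  assumes "\<And>i. P (Var i)" "\<And>f. P f \<Longrightarrow> P (Neg f)"
    and "\<And>b fs. (\<And>f. f \<in> set fs \<Longrightarrow> P f) \<Longrightarrow> P (gate b fs)"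
  shows "P F"
proof (induction F)
  case (AndG fs) then show ?case using assms(3)[of fs False] by (simp add: gate_def)
next
  case (OrG fs) then show ?case using assms(3)[of fs True] by (simp add: gate_def)
qed (use assms in auto)

definition litvars :: "formula list \<Rightarrow> nat set" where
  "litvars fs = lit_var ` {f \<in> set fs. is_literal f}"

fun lcost :: "formula \<Rightarrow> nat" where
  "lcost (Var i) = 0"
| "lcost (Neg f) = lcost f"
| "lcost (OrG fs) = card (litvars fs) + sum_list (map lcost fs)"
| "lcost (AndG fs) = card (litvars fs) + sum_list (map lcost fs)"

lemma lcost_gate [simp]: "lcost (gate b fs) = card (litvars fs) + sum_list (map lcost fs)"
  by (cases b) (simp_all add: gate_def)

lemma lcost_literal: "is_literal f \<Longrightarrow> lcost f = 0"
  by (induction f) auto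

definition kcost :: "formula \<Rightarrow> nat" where
  "kcost F = lcost F + (if is_literal F then 1 else 0)"

lemma kcost_nonliteral: "\<not> is_literal f \<Longrightarrow> kcost f = lcost f"
  by (simp add: kcost_def)

lemma kcost_Neg: "kcost (Neg F) = kcost F"
  by (simp add: kcost_def)

definition adj :: "(nat \<Rightarrow> bool) \<Rightarrow> (nat \<Rightarrow> bool) \<Rightarrow> bool" where
  "adj a b \<longleftrightarrow> (\<exists>i. b = flip a i)"

definition edges :: "(nat \<Rightarrow> bool) set \<Rightarrow> (nat \<Rightarrow> bool) set \<Rightarrow> nat" where
  "edges A B = card {(a, b). a \<in> A \<and> b \<in> B \<and> adj a b}"

lemma adj_sym: "adj a b \<Longrightarrow> adj b a"
proof -
  assume "adj a b"
  then obtain i where "b = flip a i" unfolding adj_def by blast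
  then have "a = flip b i" by (simp add: fun_eq_iff)
  then show "adj b a" unfolding adj_def by blast
qed

lemma adj_commute: "adj a b \<longleftrightarrow> adj b a"
  using adj_sym by blast

lemma edges_sym: "edges A B = edges B A"
proof -
  have "{(b, a). b \<in> B \<and> a \<in> A \<and> adj b a} = prod.swap ` {(a, b). a \<in> A \<and> b \<in> B \<and> adj a b}"
    by (auto simp: image_iff adj_commute)
  then show ?thesis unfolding edges_def by (simp add: card_image)
qed

lemma edges_eq_sum:
  "finite A \<Longrightarrow> finite B \<Longrightarrow> edges A B = (\<Sum>a\<in>A. card {b\<in>B. adj a b})"
proof -
  assume "finite A" "finite B"
  have "{(a, b). a \<in> A \<and> b \<in> B \<and> adj a b} = Sigma A (\<lambda>a. {b\<in>B. adj a b})" by auto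
  then show ?thesis unfolding edges_def using \<open>finite A\<close> \<open>finite B\<close> by (simp add: card_SigmaI)
qed

lemma edges_union:
  "finite A1 \<Longrightarrow> finite A2 \<Longrightarrow> finite B \<Longrightarrow> A1 \<inter> A2 = {} \<Longrightarrow>
   edges (A1 \<union> A2) B = edges A1 B + edges A2 B"
  by (simp add: edges_eq_sum sum.union_disjoint)

lemma edges_le_degree:
  assumes "finite A" "finite B" "\<And>a. a \<in> A \<Longrightarrow> card {b\<in>B. adj a b} \<le> d"
  shows "edges A B \<le> card A * d"
proof -
  have "edges A B \<le> (\<Sum>a\<in>A. d)"
    unfolding edges_eq_sum[OF assms(1,2)] using assms(3) by (rule sum_mono)
  then show ?thesis by simp
qed

lemma edges_ge_degree:
  assumes "finite A" "finite B" "\<And>a. a \<in> A \<Longrightarrow> d \<le> card {b\<in>B. adj a b}"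
  shows "card A * d \<le> edges A B"
proof -
  have "(\<Sum>a\<in>A. d) \<le> edges A B"
    unfolding edges_eq_sum[OF assms(1,2)] using assms(3) by (rule sum_mono)
  then show ?thesis by simp
qed

(* The arithmetic behind the sub-additivity of Khrapchenko bounds: from e1^2 <= p, e2^2 <= q and
   p q <= X Y one gets 2 e1 e2 <= X + Y (AM-GM). *)
lemma cross_term_bound:
  fixes e1 e2 p q X Y :: real
  assumes "0 \<le> e1" "0 \<le> e2" "e1\<^sup>2 \<le> p" "e2\<^sup>2 \<le> q" "0 \<le> X" "0 \<le> Y" "p * q \<le> X * Y"
  shows "2 * (e1 * e2) \<le> X + Y"
proof -
  have "0 \<le> p" using assms(3) zero_le_power2 order_trans by metis
  have "(2 * (e1 * e2))\<^sup>2 = 4 * (e1\<^sup>2 * e2\<^sup>2)" by (simp add: power2_eq_square)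
  also have "\<dots> \<le> 4 * (p * q)"
    using assms(3,4) \<open>0 \<le> p\<close> by (intro mult_left_mono mult_mono) auto
  also have "\<dots> \<le> 4 * (X * Y)" using assms(7) by simp
  also have "\<dots> \<le> (X + Y)\<^sup>2" using sum_squares_ge_zero[of "X - Y" 0]
    by (simp add: power2_eq_square algebra_simps)
  finally show ?thesis by (rule power2_le_imp_le) (use assms in simp)
qed

lemma combine_bounds:
  fixes e1 e2 a1 a2 b c1 c2 :: nat
  assumes "e1\<^sup>2 \<le> a1 * b * c1" "e2\<^sup>2 \<le> a2 * b * c2"
  shows "(e1 + e2)\<^sup>2 \<le> (a1 + a2) * b * (c1 + c2)"
proof -
  have h1: "(real e1)\<^sup>2 \<le> real a1 * real b * real c1"
    and h2: "(real e2)\<^sup>2 \<le> real a2 * real b * real c2"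
    using assms by (metis of_nat_le_iff of_nat_mult of_nat_power)+
  have "2 * (real e1 * real e2) \<le> real a1 * real b * real c2 + real a2 * real b * real c1"
    by (rule cross_term_bound[OF _ _ h1 h2]) (auto simp: algebra_simps)
  then have "real ((e1 + e2)\<^sup>2) \<le> real ((a1 + a2) * b * (c1 + c2))"
    using h1 h2 by (simp add: power2_eq_square algebra_simps)
  then show ?thesis by linarith
qed

lemma edges_cover:
  fixes groups :: "(((nat \<Rightarrow> bool) \<Rightarrow> bool) \<times> nat) list"
  assumes "finite A" "finite B"
    and "\<And>a. a \<in> A \<Longrightarrow> \<exists>g\<in>set groups. fst g a"
    and "\<And>g A'. g \<in> set groups \<Longrightarrow> finite A' \<Longrightarrow> \<forall>a\<in>A'. fst g a \<Longrightarrow>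
           (edges A' B)\<^sup>2 \<le> card A' * card B * snd g"
  shows "(edges A B)\<^sup>2 \<le> card A * card B * sum_list (map snd groups)"
  using assms
proof (induction groups arbitrary: A)
  case Nil
  then have "A = {}" using Nil.prems(3) by fastforce
  then show ?case by (simp add: edges_def)
next
  case (Cons g groups)
  define A1 where "A1 = {a\<in>A. fst g a}"
  define A2 where "A2 = A - A1"
  have fin: "finite A1" "finite A2" using Cons.prems(1) unfolding A1_def A2_def by auto
  have parts: "A1 \<union> A2 = A" and disj: "A1 \<inter> A2 = {}" unfolding A1_def A2_def by auto
  have sizes: "edges A B = edges A1 B + edges A2 B" "card A = card A1 + card A2"
    using edges_union[OF fin Cons.prems(2) disj] card_Un_disjoint[OF fin disj] parts by simp_all
  have "(edges A1 B)\<^sup>2 \<le> card A1 * card B * snd g"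
    using fin(1) by (intro Cons.prems(4)) (simp_all add: A1_def)
  moreover have "(edges A2 B)\<^sup>2 \<le> card A2 * card B * sum_list (map snd groups)"
  proof (rule Cons.IH[OF fin(2) Cons.prems(2)])
    show "\<exists>g'\<in>set groups. fst g' a" if "a \<in> A2" for a
      using that Cons.prems(3)[of a] unfolding A2_def A1_def by auto
  qed (rule Cons.prems(4); simp)
  ultimately have "(edges A1 B + edges A2 B)\<^sup>2 \<le> (card A1 + card A2) * card B * (snd g + sum_list (map snd groups))"
    by (rule combine_bounds)
  then show ?case using sizes by simp
qed

(* Base of the Khrapchenko argument: if every a in A satisfies some literal of L with value c
   and no literal of L takes value c on B, then an edge from a to B must flip the variable
   of a satisfied literal; so every a has at most one neighbour in B and every b at most
   |lit_var ` L| neighbours in A. *)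
lemma literal_group_bound:
  assumes "finite A" "finite B" "finite L" "\<forall>f\<in>L. is_literal f"
    and "\<forall>a\<in>A. \<exists>f\<in>L. eval a f = c" "\<forall>b\<in>B. \<forall>f\<in>L. eval b f \<noteq> c"
  shows "(edges A B)\<^sup>2 \<le> card A * card B * card (lit_var ` L)"
proof -
  have flip_var: "i = lit_var f" if "f \<in> L" "eval a f = c" "flip a i \<in> B" for a f i
    using that assms(4,6) literal_flip by metis
  have "edges A B \<le> card A * 1"
  proof (rule edges_le_degree[OF assms(1,2)])
    fix a assume "a \<in> A"
    then obtain f where "f \<in> L" "eval a f = c" using assms(5) by blast
    have "{b\<in>B. adj a b} \<subseteq> {flip a (lit_var f)}"
    proof
      fix b assume "b \<in> {b\<in>B. adj a b}"
      then obtain i where "b \<in> B" "b = flip a i" unfolding adj_def by blast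
      then show "b \<in> {flip a (lit_var f)}"
        using flip_var[OF \<open>f \<in> L\<close> \<open>eval a f = c\<close>, of i] by simp
    qed
    then show "card {b\<in>B. adj a b} \<le> 1"
      using card_mono[of "{flip a (lit_var f)}"] by simp
  qed
  moreover have "edges B A \<le> card B * card (lit_var ` L)"
  proof (rule edges_le_degree[OF assms(2,1)])
    fix b assume "b \<in> B"
    have "{a\<in>A. adj b a} \<subseteq> flip b ` lit_var ` L"
    proof
      fix a assume "a \<in> {a\<in>A. adj b a}"
      then have "a \<in> A" "adj a b" using adj_commute by auto
      then obtain i where "a \<in> A" "b = flip a i" unfolding adj_def by blast
      moreover obtain f where "f \<in> L" "eval a f = c" using assms(5) \<open>a \<in> A\<close> by blast
      ultimately have "i \<in> lit_var ` L" "a = flip b i"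
        using flip_var \<open>b \<in> B\<close> by auto
      then show "a \<in> flip b ` lit_var ` L" by blast
    qed
    then have "card {a\<in>A. adj b a} \<le> card (flip b ` lit_var ` L)"
      using assms(3) by (intro card_mono) auto
    also have "\<dots> \<le> card (lit_var ` L)" by (rule card_image_le) (use assms(3) in simp)
    finally show "card {a\<in>A. adj b a} \<le> card (lit_var ` L)" .
  qed
  ultimately have "edges A B * edges A B \<le> card A * (card B * card (lit_var ` L))"
    by (intro mult_mono) (simp_all add: edges_sym[of B A])
  then show ?thesis by (simp add: power2_eq_square mult.assoc)
qed

(* Inductive step for a gate: split A into the inputs satisfied by a literal child and those
   satisfied by each non-literal child, and combine the respective bounds. *)
lemma gate_bound:
  assumes children: "\<And>g A B c. g \<in> set gs \<Longrightarrow> finite A \<Longrightarrow> finite B \<Longrightarrow>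
      \<forall>a\<in>A. eval a g = c \<Longrightarrow> \<forall>b\<in>B. eval b g \<noteq> c \<Longrightarrow>
      (edges A B)\<^sup>2 \<le> card A * card B * kcost g"
    and fin: "finite A" "finite B"
    and A: "\<forall>a\<in>A. \<exists>g\<in>set gs. eval a g = c"
    and B: "\<forall>b\<in>B. \<forall>g\<in>set gs. eval b g \<noteq> c"
  shows "(edges A B)\<^sup>2 \<le> card A * card B * (card (litvars gs) + sum_list (map lcost gs))"
proof -
  define lits where "lits = {g \<in> set gs. is_literal g}"
  define lit_group where "lit_group = (\<lambda>a. \<exists>g\<in>lits. eval a g = c, card (litvars gs))"
  define groups where "groups =
    lit_group # map (\<lambda>g. (\<lambda>a. eval a g = c, lcost g)) (filter (\<lambda>g. \<not> is_literal g) gs)"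
  have "sum_list (map lcost (filter (\<lambda>g. \<not> is_literal g) gs)) = sum_list (map lcost gs)"
    by (rule sum_list_map_filter) (simp add: lcost_literal)
  then have "sum_list (map snd groups) = card (litvars gs) + sum_list (map lcost gs)"
    unfolding groups_def lit_group_def by (simp add: o_def)
  moreover have "(edges A B)\<^sup>2 \<le> card A * card B * sum_list (map snd groups)"
  proof (rule edges_cover[OF fin])
    fix a assume "a \<in> A"
    then obtain g where g: "g \<in> set gs" "eval a g = c" using A by blast
    show "\<exists>grp\<in>set groups. fst grp a"
    proof (cases "is_literal g")
      case True
      then have "fst lit_group a" using g unfolding lit_group_def lits_def by auto
      then show ?thesis unfolding groups_def by auto
    next
      case False
      then have "(\<lambda>a. eval a g = c, lcost g) \<in> set groups" using g(1) unfolding groups_def by simp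
      then show ?thesis using g(2) by (intro bexI) auto
    qed
  next
    fix grp A' assume grp: "grp \<in> set groups" and "finite A'" and A': "\<forall>a\<in>A'. fst grp a"
    consider (literals) "grp = lit_group"
      | (child) g where "g \<in> set gs" "\<not> is_literal g" "grp = (\<lambda>a. eval a g = c, lcost g)"
      using grp unfolding groups_def by auto
    then show "(edges A' B)\<^sup>2 \<le> card A' * card B * snd grp"
    proof cases
      case literals
      have "lit_var ` lits = litvars gs" unfolding lits_def litvars_def ..
      moreover have "(edges A' B)\<^sup>2 \<le> card A' * card B * card (lit_var ` lits)"
        using \<open>finite A'\<close> fin(2) A' B literals
        by (intro literal_group_bound) (auto simp: lits_def lit_group_def)
      ultimately show ?thesis using literals by (simp add: lit_group_def)
    next
      case child
      then show ?thesis
        using children[of g A' B c] \<open>finite A'\<close> fin(2) A' B by (simp add: kcost_nonliteral)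
    qed
  qed
  ultimately show ?thesis by simp
qed

theorem khrapchenko:
  assumes "finite A" "finite B" "\<forall>a\<in>A. eval a F = c" "\<forall>b\<in>B. eval b F \<noteq> c"
  shows "(edges A B)\<^sup>2 \<le> card A * card B * kcost F"
  using assms
proof (induction F arbitrary: A B c rule: formula_gate_induct)
  case (Var i)
  have "(edges A B)\<^sup>2 \<le> card A * card B * card (lit_var ` {Var i})"
    by (rule literal_group_bound) (use Var.prems in auto)
  then show ?case by (simp add: kcost_def)
next
  case (Neg f)
  have "(edges A B)\<^sup>2 \<le> card A * card B * kcost f"
    by (rule Neg.IH[of A B "\<not> c"]) (use Neg.prems in auto)
  then show ?case by (simp add: kcost_def)
next
  case (Gate b gs)
  have cost: "kcost (gate b gs) = card (litvars gs) + sum_list (map lcost gs)"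
    by (simp add: kcost_def)
  have absorbing: "\<forall>x\<in>X. \<exists>g\<in>set gs. eval x g = b" "\<forall>y\<in>Y. \<forall>g\<in>set gs. eval y g \<noteq> b"
    if "\<forall>x\<in>X. eval x (gate b gs) = b" "\<forall>y\<in>Y. eval y (gate b gs) \<noteq> b" for X Y
    using that by (simp_all add: eval_gate_eq)
  show ?case
  proof (cases "c = b")
    case True
    have "\<forall>a\<in>A. eval a (gate b gs) = b" "\<forall>x\<in>B. eval x (gate b gs) \<noteq> b"
      using Gate.prems(3,4) True by simp_all
    from gate_bound[OF Gate.IH Gate.prems(1,2) absorbing[OF this]]
    show ?thesis unfolding cost .
  next
    case False
    then have "c = (\<not> b)" by simp
    then have "\<forall>x\<in>B. eval x (gate b gs) = b" "\<forall>a\<in>A. eval a (gate b gs) \<noteq> b"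
      using Gate.prems(3,4) by simp_all
    from gate_bound[OF Gate.IH Gate.prems(2,1) absorbing[OF this]]
    have "(edges B A)\<^sup>2 \<le> card B * card A * kcost (gate b gs)" unfolding cost .
    then show ?thesis by (simp add: edges_sym[of B A] mult.commute[of "card B"])
  qed
qed

corollary khrapchenko_degree:
  assumes "finite A" "finite B" "A \<noteq> {}" "B \<noteq> {}"
    and "\<forall>a\<in>A. eval a F = c" "\<forall>b\<in>B. eval b F \<noteq> c"
    and "\<And>a. a \<in> A \<Longrightarrow> dA \<le> card {b\<in>B. adj a b}"
    and "\<And>b. b \<in> B \<Longrightarrow> dB \<le> card {a\<in>A. adj b a}"
  shows "dA * dB \<le> kcost F"
proof -
  have "card A * dA \<le> edges A B" "card B * dB \<le> edges A B"
    using edges_ge_degree[OF assms(1,2,7)] edges_ge_degree[OF assms(2,1,8)]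
    unfolding edges_sym[of B A] by simp_all
  then have "(card A * card B) * (dA * dB) \<le> edges A B * edges A B"
    using mult_le_mono[of "card A * dA" "edges A B" "card B * dB" "edges A B"]
    by (simp add: algebra_simps)
  also have "\<dots> \<le> (card A * card B) * kcost F"
    using khrapchenko[OF assms(1,2,5,6)] by (simp add: power2_eq_square)
  finally show ?thesis using assms(1-4) by (simp add: card_gt_0_iff)
qed

(* Restriction of a formula by x_i := v yields either a constant (Inl c) or a simplified formula
   (Inr g). A gate absorbs the constant b of its kind; the remaining constant children are dropped. *)
fun rights :: "(bool + formula) list \<Rightarrow> formula list" where
  "rights [] = []"
| "rights (Inl c # rs) = rights rs"
| "rights (Inr g # rs) = g # rights rs"

definition val :: "(nat \<Rightarrow> bool) \<Rightarrow> bool + formula \<Rightarrow> bool" where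
  "val x = case_sum (\<lambda>c. c) (eval x)"

definition gsize :: "bool + formula \<Rightarrow> nat" where
  "gsize = case_sum (\<lambda>c. 0) gates"

lemma set_rights: "g \<in> set (rights rs) \<longleftrightarrow> Inr g \<in> set rs"
  by (induction rs rule: rights.induct) auto

lemma sum_list_rights: "sum_list (map gates (rights rs)) = sum_list (map gsize rs)"
  by (induction rs rule: rights.induct) (auto simp: gsize_def)

definition gate_res :: "bool \<Rightarrow> (bool + formula) list \<Rightarrow> bool + formula" where
  "gate_res b rs = (if Inl b \<in> set rs then Inl b else Inr (gate b (rights rs)))"

lemma val_gate_res: "val x (gate_res b rs) = b \<longleftrightarrow> (\<exists>r\<in>set rs. val x r = b)"
proof (cases "Inl b \<in> set rs")
  case True
  then show ?thesis by (force simp: gate_res_def val_def)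
next
  case False
  have "(\<exists>r\<in>set rs. val x r = b) \<longleftrightarrow> (\<exists>g\<in>set (rights rs). eval x g = b)"
  proof
    assume "\<exists>r\<in>set rs. val x r = b"
    then obtain r where "r \<in> set rs" "val x r = b" ..
    with False show "\<exists>g\<in>set (rights rs). eval x g = b"
      by (cases r) (auto simp: val_def set_rights)
  next
    assume "\<exists>g\<in>set (rights rs). eval x g = b"
    then show "\<exists>r\<in>set rs. val x r = b" by (force simp: val_def set_rights)
  qed
  with False show ?thesis by (simp add: gate_res_def val_def eval_gate_eq)
qed

fun restr :: "nat \<Rightarrow> bool \<Rightarrow> formula \<Rightarrow> bool + formula" where
  "restr i v (Var j) = (if j = i then Inl v else Inr (Var j))"
| "restr i v (Neg f) = map_sum Not Neg (restr i v f)"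
| "restr i v (OrG fs) = gate_res True (map (restr i v) fs)"
| "restr i v (AndG fs) = gate_res False (map (restr i v) fs)"

lemma restr_gate [simp]: "restr i v (gate b fs) = gate_res b (map (restr i v) fs)"
  by (cases b) (simp_all add: gate_def)

lemma val_restr: "val x (restr i v F) = eval (x(i := v)) F"
proof (induction F rule: formula_gate_induct)
  case (Gate b fs)
  have "val x (restr i v (gate b fs)) = b \<longleftrightarrow> eval (x(i := v)) (gate b fs) = b"
    using Gate.IH by (simp add: val_gate_res eval_gate_eq del: fun_upd_apply)
  then show ?case by (metis (full_types))
next
  case (Neg f)
  then show ?case by (cases "restr i v f") (simp_all add: val_def del: fun_upd_apply)
qed (simp add: val_def)

lemma vars_restr: "restr i v F = Inr g \<Longrightarrow> vars g \<subseteq> vars F - {i}"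
proof (induction F arbitrary: g rule: formula_gate_induct)
  case (Gate b fs)
  then have g: "g = gate b (rights (map (restr i v) fs))"
    by (auto simp: gate_res_def split: if_splits)
  show ?case
  proof
    fix k assume "k \<in> vars g"
    then obtain h where "Inr h \<in> set (map (restr i v) fs)" "k \<in> vars h"
      using g by (auto simp: set_rights)
    then obtain f where "f \<in> set fs" "restr i v f = Inr h" "k \<in> vars h" by auto
    then show "k \<in> vars (gate b fs) - {i}" using Gate.IH by fastforce
  qed
next
  case (Neg f)
  then show ?case by (cases "restr i v f") auto
qed (auto split: if_splits)

lemma restr_literal: "is_literal f \<Longrightarrow> restr (lit_var f) v f = Inl (v = lit_pol f)"
  by (induction f) auto

(* killed i v F counts the gates of F having a literal child on x_i that becomes the absorbing constant
   under x_i := v; all these gates vanish from the restricted formula. *)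
definition absorbed :: "nat \<Rightarrow> bool \<Rightarrow> bool \<Rightarrow> formula list \<Rightarrow> nat" where
  "absorbed i v b fs =
     (if \<exists>f\<in>set fs. is_literal f \<and> lit_var f = i \<and> (v = lit_pol f) = b then 1 else 0)"

fun killed :: "nat \<Rightarrow> bool \<Rightarrow> formula \<Rightarrow> nat" where
  "killed i v (Var j) = 0"
| "killed i v (Neg f) = killed i v f"
| "killed i v (OrG fs) = absorbed i v True fs + sum_list (map (killed i v) fs)"
| "killed i v (AndG fs) = absorbed i v False fs + sum_list (map (killed i v) fs)"

lemma killed_gate [simp]:
  "killed i v (gate b fs) = absorbed i v b fs + sum_list (map (killed i v) fs)"
  by (cases b) (simp_all add: gate_def)

lemma gates_restr: "gsize (restr i v F) + killed i v F \<le> gates F"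
proof (induction F rule: formula_gate_induct)
  case (Gate b fs)
  let ?rs = "map (restr i v) fs"
  have "sum_list (map gsize ?rs) + sum_list (map (killed i v) fs)
      = sum_list (map (\<lambda>f. gsize (restr i v f) + killed i v f) fs)"
    by (simp add: sum_list_addf o_def)
  also have "\<dots> \<le> sum_list (map gates fs)"
    using Gate.IH by (intro sum_list_mono) auto
  finally have children: "sum_list (map gsize ?rs) + sum_list (map (killed i v) fs)
      \<le> sum_list (map gates fs)" .
  show ?case
  proof (cases "Inl b \<in> set ?rs")
    case True
    then show ?thesis using children by (simp add: gate_res_def gsize_def absorbed_def)
  next
    case False
    have "absorbed i v b fs = 0"
    proof (rule ccontr)
      assume "absorbed i v b fs \<noteq> 0"
      then obtain f where "f \<in> set fs" "is_literal f" "lit_var f = i" "(v = lit_pol f) = b"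
        unfolding absorbed_def by (auto split: if_splits)
      then have "Inl b \<in> set ?rs" using restr_literal[of f v] by force
      with False show False ..
    qed
    then show ?thesis using False children by (simp add: gate_res_def gsize_def sum_list_rights)
  qed
next
  case (Neg f)
  then show ?case by (cases "restr i v f") (simp_all add: gsize_def)
qed (simp add: gsize_def)

(* Every distinct literal variable below a gate is counted by one of the two restrictions of its variable,
   so the literal cost is bounded by the total number of killed gates over all 2|V| restrictions. *)
definition kills :: "nat \<Rightarrow> formula \<Rightarrow> nat" where
  "kills i F = killed i True F + killed i False F"

lemma sum_sum_list_swap:
  "(\<Sum>i\<in>V. sum_list (map (g i) fs)) = sum_list (map (\<lambda>f. \<Sum>i\<in>V. g i f) fs)"
  by (induction fs) (simp_all add: sum.distrib)

lemma card_le_sum: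
  assumes "finite V" "S \<subseteq> V" "\<And>i. i \<in> S \<Longrightarrow> 1 \<le> h i"
  shows "card S \<le> (\<Sum>i\<in>V. h i)"
proof -
  have "card S = (\<Sum>i\<in>S. 1)" by simp
  also have "\<dots> \<le> (\<Sum>i\<in>S. h i)" using assms(3) by (rule sum_mono)
  also have "\<dots> \<le> (\<Sum>i\<in>V. h i)" using assms(1,2) by (rule sum_mono2) simp
  finally show ?thesis .
qed

lemma lcost_le_kills:
  assumes "finite V"
  shows "vars F \<subseteq> V \<Longrightarrow> lcost F \<le> (\<Sum>i\<in>V. kills i F)"
proof (induction F rule: formula_gate_induct)
  case (Gate b fs)
  define h where "h i = absorbed i True b fs + absorbed i False b fs" for i
  have lits: "card (litvars fs) \<le> (\<Sum>i\<in>V. h i)"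
  proof (rule card_le_sum[OF assms])
    show "litvars fs \<subseteq> V"
      using Gate.prems lit_var_in_vars unfolding litvars_def by fastforce
  next
    fix i assume "i \<in> litvars fs"
    then obtain f where "f \<in> set fs" "is_literal f" "lit_var f = i" unfolding litvars_def by auto
    then show "1 \<le> h i" unfolding h_def absorbed_def by (cases "lit_pol f = b") auto
  qed
  have "sum_list (map lcost fs) \<le> sum_list (map (\<lambda>f. \<Sum>i\<in>V. kills i f) fs)"
    using Gate by (intro sum_list_mono) auto
  also have "\<dots> = (\<Sum>i\<in>V. sum_list (map (kills i) fs))" by (rule sum_sum_list_swap[symmetric])
  finally have "lcost (gate b fs) \<le> (\<Sum>i\<in>V. h i) + (\<Sum>i\<in>V. sum_list (map (kills i) fs))"
    using lits by simp
  also have "\<dots> = (\<Sum>i\<in>V. kills i (gate b fs))"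
  proof -
    have "sum_list (map (kills i) fs)
        = sum_list (map (killed i True) fs) + sum_list (map (killed i False) fs)" for i
      by (induction fs) (simp_all add: kills_def)
    then show ?thesis by (simp add: kills_def h_def sum.distrib)
  qed
  finally show ?case .
qed (simp_all add: kills_def)

lemma heavy_restriction:
  assumes "finite V" "V \<noteq> {}" "vars F \<subseteq> V"
  obtains i v where "i \<in> V" "kcost F \<le> 2 * card V * killed i v F + 1"
proof -
  have "Max ((\<lambda>j. kills j F) ` V) \<in> (\<lambda>j. kills j F) ` V"
    using assms(1,2) by (intro Max_in) auto
  then obtain i where "i \<in> V" and max: "kills i F = Max ((\<lambda>j. kills j F) ` V)"
    by (metis imageE)
  obtain v where v: "kills i F \<le> 2 * killed i v F"
    using that[of True] that[of False] unfolding kills_def by fastforce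
  have "lcost F \<le> (\<Sum>j\<in>V. kills j F)" using lcost_le_kills[OF assms(1,3)] .
  also have "\<dots> \<le> card V * kills i F"
    using sum_bounded_above[of V "\<lambda>j. kills j F" "kills i F"] max assms(1) by simp
  also have "\<dots> \<le> card V * (2 * killed i v F)" using v by simp
  finally have "kcost F \<le> card V * (2 * killed i v F) + 1" by (simp add: kcost_def)
  then show ?thesis using that \<open>i \<in> V\<close> by (simp add: mult.assoc mult.left_commute)
qed

lemma restrict_pair:
  obtains c where "\<forall>x. eval (x(j := \<not> v, i := v)) F = c"
  | F' where "vars F' \<subseteq> vars F - {i, j}" "\<forall>x. eval x F' = eval (x(j := \<not> v, i := v)) F"
      "gates F' + killed i v F \<le> gates F"
proof (cases "restr i v F")
  case (Inl c)
  then show ?thesis using that(1)[of c] val_restr[of _ i v F] by (simp add: val_def)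
next
  case (Inr F1)
  have gates1: "gates F1 + killed i v F \<le> gates F"
    using gates_restr[of i v F] Inr by (simp add: gsize_def)
  have eval1: "eval y F1 = eval (y(i := v)) F" for y
    using val_restr[of y i v F] Inr by (simp add: val_def)
  show ?thesis
  proof (cases "restr j (\<not> v) F1")
    case (Inl c)
    then show ?thesis using that(1)[of c] val_restr[of _ j "\<not> v" F1] eval1 by (simp add: val_def)
  next
    case (Inr F2)
    have "vars F2 \<subseteq> vars F - {i, j}"
      using vars_restr[OF Inr] vars_restr[OF \<open>restr i v F = Inr F1\<close>] by auto
    moreover have "eval x F2 = eval (x(j := \<not> v, i := v)) F" for x
      using val_restr[of x j "\<not> v" F1] Inr eval1 by (simp add: val_def)
    moreover have "gates F2 \<le> gates F1"
      using gates_restr[of j "\<not> v" F1] Inr by (simp add: gsize_def)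
    ultimately show ?thesis using that(2)[of F2] gates1 by simp
  qed
qed

lemma heavy_pair_restriction:
  assumes "finite V" "2 \<le> card V" "vars F \<subseteq> V"
  obtains i j v where "i \<in> V" "j \<in> V" "i \<noteq> j" "kcost F \<le> 2 * card V * killed i v F + 1"
    and "\<exists>c. \<forall>x. eval (x(j := \<not> v, i := v)) F = c"
  | i j v F' where "i \<in> V" "j \<in> V" "i \<noteq> j" "kcost F \<le> 2 * card V * killed i v F + 1"
    and "vars F' \<subseteq> V - {i, j}" "\<forall>x. eval x F' = eval (x(j := \<not> v, i := v)) F"
    and "gates F' + killed i v F \<le> gates F"
proof -
  have "V \<noteq> {}" using assms(2) by auto
  then obtain i v where i: "i \<in> V" and heavy: "kcost F \<le> 2 * card V * killed i v F + 1"
    using heavy_restriction[OF assms(1) _ assms(3)] by blast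
  have "V \<noteq> {i}" using assms(2) by auto
  then obtain j where j: "j \<in> V" "j \<noteq> i" using i by blast
  show ?thesis
  proof (rule restrict_pair[of j v i F])
    fix c assume "\<forall>x. eval (x(j := \<not> v, i := v)) F = c"
    then show ?thesis using that(1) i j heavy by blast
  next
    fix F' assume "vars F' \<subseteq> vars F - {i, j}" "\<forall>x. eval x F' = eval (x(j := \<not> v, i := v)) F"
      "gates F' + killed i v F \<le> gates F"
    then show ?thesis using that(2)[of i j v F'] i j heavy assms(3) by blast
  qed
qed

lemma eval_constant: "eval x (gate (\<not> c) []) = c"
  and kcost_constant: "kcost (gate b []) = 0"
  by (simp_all add: eval_gate kcost_def litvars_def)

lemma nonconstant_if_costly:
  assumes "finite V" "V \<noteq> {}" "\<And>F. \<forall>x. eval x F = f x \<Longrightarrow> (card V)\<^sup>2 \<le> 4 * kcost F"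
  shows "\<not> (\<exists>c. \<forall>x. f x = c)"
proof
  assume "\<exists>c. \<forall>x. f x = c"
  then obtain c where "\<forall>x. f x = c" by blast
  then have "\<forall>x. eval x (gate (\<not> c) []) = f x" by (simp add: eval_constant)
  from assms(3)[OF this] have "(card V)\<^sup>2 \<le> 0" by (simp add: kcost_constant)
  then show False using assms(1,2) by simp
qed

lemma card_remove_pair: "finite V \<Longrightarrow> i \<in> V \<Longrightarrow> j \<in> V \<Longrightarrow> i \<noteq> j \<Longrightarrow> card (V - {i, j}) = card V - 2"
  by (simp add: card_Diff_subset)

(* The arithmetic of one induction step: m^2 <= 4 kcost <= 4(2 m k + 1) forces k >= m/8 - O(1), which
   pays for the increase of the quadratic bound from m - 2 to m. *)
lemma quadratic_step_arith:
  fixes m g g' k :: nat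
  assumes m: "33 \<le> m"
    and IH: "(m - 2)\<^sup>2 \<le> 32 * g' + 32 * (m - 2)"
    and gk: "g' + k \<le> g"
    and kc: "m\<^sup>2 \<le> 4 * (2 * m * k + 1)"
  shows "m\<^sup>2 \<le> 32 * g + 32 * m"
proof -
  define M where "M = m - 2"
  have M: "m = M + 2" using m unfolding M_def by simp
  have IH': "M\<^sup>2 \<le> 32 * g' + 32 * M" using IH M by simp
  have kc': "(M + 2)\<^sup>2 \<le> 8 * (M + 2) * k + 4" using kc M by (simp add: algebra_simps)
  have "M + 2 \<le> 8 * k + 17"
  proof (rule ccontr)
    assume "\<not> M + 2 \<le> 8 * k + 17"
    then have "8 * k + 18 \<le> M + 2" by simp
    then have "(M + 2) * (8 * k + 18) \<le> (M + 2) * (M + 2)" by (rule mult_le_mono2)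
    then have "8 * (M + 2) * k + 18 * (M + 2) \<le> (M + 2)\<^sup>2"
      by (simp add: power2_eq_square algebra_simps)
    then show False using kc' by simp
  qed
  then have "(M + 2)\<^sup>2 \<le> 32 * (g' + k) + 32 * (M + 2)"
    using IH' by (simp add: power2_eq_square algebra_simps)
  then show ?thesis using gk M by simp
qed

theorem quadratic_lower_bound:
  fixes P :: "nat set \<Rightarrow> ((nat \<Rightarrow> bool) \<Rightarrow> bool) \<Rightarrow> bool"
  assumes closed: "\<And>V f i j v. finite V \<Longrightarrow> P V f \<Longrightarrow> i \<in> V \<Longrightarrow> j \<in> V \<Longrightarrow> i \<noteq> j \<Longrightarrow>
      P (V - {i, j}) (\<lambda>x. f (x(j := \<not> v, i := v)))"
    and khr: "\<And>V f F. finite V \<Longrightarrow> P V f \<Longrightarrow> V \<noteq> {} \<Longrightarrow> \<forall>x. eval x F = f x \<Longrightarrow>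
      (card V)\<^sup>2 \<le> 4 * kcost F"
  shows "finite V \<Longrightarrow> P V f \<Longrightarrow> vars F \<subseteq> V \<Longrightarrow> \<forall>x. eval x F = f x \<Longrightarrow>
    (card V)\<^sup>2 \<le> 32 * gates F + 32 * card V"
proof (induction "card V" arbitrary: V f F rule: less_induct)
  case less
  note fin = less.prems(1) and fam = less.prems(2) and ev = less.prems(4)
  define m where "m = card V"
  show ?case
  proof (cases "m \<le> 32")
    case True
    then have "m * m \<le> 32 * m" by simp
    then have "m * m \<le> 32 * gates F + 32 * m" by linarith
    then show ?thesis by (simp add: m_def power2_eq_square)
  next
    case False
    then have "V \<noteq> {}" "2 \<le> card V" unfolding m_def by auto
    have nonconstant: "\<not> (\<exists>c. \<forall>x. f (x(j := \<not> v, i := v)) = c)"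
      if "i \<in> V" "j \<in> V" "i \<noteq> j" for i j v
    proof (rule nonconstant_if_costly)
      show "finite (V - {i, j})" using fin by simp
      have "card (V - {i, j}) \<noteq> 0" using card_remove_pair[OF fin that] False unfolding m_def by simp
      then show "V - {i, j} \<noteq> {}" by (metis card.empty)
      then show "(card (V - {i, j}))\<^sup>2 \<le> 4 * kcost G"
        if "\<forall>x. eval x G = f (x(j := \<not> v, i := v))" for G
        using khr[OF _ closed[OF fin fam \<open>i \<in> V\<close> \<open>j \<in> V\<close> \<open>i \<noteq> j\<close>, where v = v] _ that] fin by simp
    qed
    obtain i j v F' where ij: "i \<in> V" "j \<in> V" "i \<noteq> j"
      and heavy: "kcost F \<le> 2 * m * killed i v F + 1"
      and F': "vars F' \<subseteq> V - {i, j}" "\<forall>x. eval x F' = f (x(j := \<not> v, i := v))"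
      and gates': "gates F' + killed i v F \<le> gates F"
    proof (rule heavy_pair_restriction[OF fin \<open>2 \<le> card V\<close> less.prems(3)])
      fix i j v assume "i \<in> V" "j \<in> V" "i \<noteq> j" "\<exists>c. \<forall>x. eval (x(j := \<not> v, i := v)) F = c"
      then show ?thesis using nonconstant[of i j v] ev by simp
    next
      fix i j v F' assume "i \<in> V" "j \<in> V" "i \<noteq> j" "kcost F \<le> 2 * card V * killed i v F + 1"
        "vars F' \<subseteq> V - {i, j}" "\<forall>x. eval x F' = eval (x(j := \<not> v, i := v)) F"
        "gates F' + killed i v F \<le> gates F"
      then show ?thesis using that[of i j v F'] ev unfolding m_def by simp
    qed
    have card': "card (V - {i, j}) = m - 2" using card_remove_pair[OF fin ij] unfolding m_def .
    then have "card (V - {i, j}) < card V" using False unfolding m_def by simp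
    then have "(m - 2)\<^sup>2 \<le> 32 * gates F' + 32 * (m - 2)"
      using less.hyps[OF _ _ closed[OF fin fam ij] F'] fin card' by simp
    moreover have "m\<^sup>2 \<le> 4 * (2 * m * killed i v F + 1)"
      using khr[OF fin fam \<open>V \<noteq> {}\<close> ev] heavy unfolding m_def by (meson le_trans mult_le_mono2)
    ultimately show ?thesis
      using quadratic_step_arith[of m] gates' False unfolding m_def by simp
  qed
qed

definition weight :: "nat set \<Rightarrow> (nat \<Rightarrow> bool) \<Rightarrow> nat" where
  "weight V x = card {k\<in>V. x k}"

definition supported :: "nat set \<Rightarrow> (nat \<Rightarrow> bool) set" where
  "supported V = {x. \<forall>k. x k \<longrightarrow> k \<in> V}"

definition parity_on :: "nat set \<Rightarrow> (nat \<Rightarrow> bool) \<Rightarrow> bool" where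
  "parity_on V x \<longleftrightarrow> odd (weight V x)"

definition majority_on :: "nat set \<Rightarrow> (nat \<Rightarrow> bool) \<Rightarrow> bool" where
  "majority_on V x \<longleftrightarrow> card V < 2 * weight V x"

lemma parity_eq: "parity n = parity_on {..<n}"
  and majority_eq: "majority n = majority_on {..<n}"
proof -
  have "{i. i < n \<and> x i} = {k\<in>{..<n}. x k}" for x :: "nat \<Rightarrow> bool" by auto
  then show "parity n = parity_on {..<n}" "majority n = majority_on {..<n}"
    by (simp_all add: fun_eq_iff parity_def parity_on_def majority_def majority_on_def weight_def)
qed

lemma finite_supported: "finite V \<Longrightarrow> finite (supported V)"
proof -
  assume "finite V"
  have "supported V \<subseteq> (\<lambda>S k. k \<in> S) ` Pow V"
  proof
    fix x assume "x \<in> supported V"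
    then have "x = (\<lambda>k. k \<in> {k\<in>V. x k})" unfolding supported_def by auto
    then show "x \<in> (\<lambda>S k. k \<in> S) ` Pow V" by blast
  qed
  then show ?thesis by (rule finite_subset) (simp add: \<open>finite V\<close>)
qed

lemma flip_supported: "x \<in> supported V \<Longrightarrow> i \<in> V \<Longrightarrow> flip x i \<in> supported V"
  unfolding supported_def by auto

lemma weight_flip:
  assumes "finite V" "i \<in> V"
  shows "weight V (flip x i) = (if x i then weight V x - 1 else Suc (weight V x))"
proof -
  have "{k\<in>V. flip x i k} = (if x i then {k\<in>V. x k} - {i} else insert i {k\<in>V. x k})"
    using assms(2) by auto
  then show ?thesis unfolding weight_def using assms by (auto simp: card_insert_if)
qed

lemma weight_pair:
  assumes "finite V" "i \<in> V" "j \<in> V" "i \<noteq> j"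
  shows "weight V (x(j := \<not> v, i := v)) = Suc (weight (V - {i, j}) x)"
proof -
  have "{k\<in>V. (x(j := \<not> v, i := v)) k} = insert (if v then i else j) {k\<in>V - {i, j}. x k}"
    using assms by auto
  then show ?thesis unfolding weight_def using assms by (simp add: card_insert_if)
qed

lemma exists_weight:
  assumes "finite V" "w \<le> card V"
  obtains x where "x \<in> supported V" "weight V x = w"
proof -
  obtain S where S: "S \<subseteq> V" "card S = w" using obtain_subset_with_card_n assms(2) by metis
  then have "{k\<in>V. k \<in> S} = S" by auto
  then show ?thesis using that[of "\<lambda>k. k \<in> S"] S unfolding weight_def supported_def by auto
qed

lemma degree_from_flips:
  assumes "finite B" "\<And>i. i \<in> S \<Longrightarrow> flip a i \<in> B"
  shows "card S \<le> card {b\<in>B. adj a b}"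
proof -
  have "inj_on (flip a) S"
  proof (rule inj_onI)
    fix i j assume "flip a i = flip a j"
    then have "flip a i i = flip a j i" by simp
    then show "i = j" by (cases "i = j") auto
  qed
  then have "card S = card (flip a ` S)" by (simp add: card_image)
  also have "\<dots> \<le> card {b\<in>B. adj a b}"
    using assms unfolding adj_def by (intro card_mono) auto
  finally show ?thesis .
qed

lemma degree_down:
  assumes "finite V" "a \<in> supported V" "finite B"
    and "{x\<in>supported V. weight V x = weight V a - 1} \<subseteq> B"
  shows "weight V a \<le> card {b\<in>B. adj a b}"
  unfolding weight_def
proof (rule degree_from_flips[OF assms(3)])
  fix i assume "i \<in> {i\<in>V. a i}"
  then show "flip a i \<in> B"
    using assms(2,4) weight_flip[OF assms(1), of i a] flip_supported[of a V i]
    unfolding weight_def by auto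
qed

lemma degree_up:
  assumes "finite V" "a \<in> supported V" "finite B"
    and "{x\<in>supported V. weight V x = Suc (weight V a)} \<subseteq> B"
  shows "card V - weight V a \<le> card {b\<in>B. adj a b}"
proof -
  have "card {i\<in>V. \<not> a i} = card V - weight V a"
  proof -
    have "{i\<in>V. \<not> a i} = V - {i\<in>V. a i}" by auto
    then show ?thesis unfolding weight_def using assms(1) by (simp add: card_Diff_subset)
  qed
  moreover have "card {i\<in>V. \<not> a i} \<le> card {b\<in>B. adj a b}"
  proof (rule degree_from_flips[OF assms(3)])
    fix i assume "i \<in> {i\<in>V. \<not> a i}"
    then show "flip a i \<in> B"
      using assms(2,4) weight_flip[OF assms(1), of i a] flip_supported[of a V i] by auto
  qed
  ultimately show ?thesis by simp
qed

(* PARITY: odd and even inputs form a complete bipartite Hamming graph, all degrees are |V|. *)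
lemma parity_kcost:
  assumes fin: "finite V" and "V \<noteq> {}" and ev: "\<forall>x. eval x F = parity_on V x"
  shows "(card V)\<^sup>2 \<le> kcost F"
proof -
  define A where "A = {x\<in>supported V. parity_on V x}"
  define B where "B = {x\<in>supported V. \<not> parity_on V x}"
  have fin_AB: "finite A" "finite B"
    using finite_supported[OF fin] unfolding A_def B_def by auto
  obtain i0 where "i0 \<in> V" using \<open>V \<noteq> {}\<close> by blast
  then have "{k\<in>V. k = i0} = {i0}" by auto
  then have "(\<lambda>k. k = i0) \<in> A" unfolding A_def supported_def parity_on_def weight_def
    using \<open>i0 \<in> V\<close> by auto
  moreover have "(\<lambda>k. False) \<in> B" unfolding B_def supported_def parity_on_def weight_def by auto
  ultimately have nonempty: "A \<noteq> {}" "B \<noteq> {}" by auto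
  have flip_parity: "parity_on V (flip x i) \<longleftrightarrow> \<not> parity_on V x" if "i \<in> V" "x \<in> supported V" for x i
  proof -
    have "x i \<Longrightarrow> 0 < weight V x"
      using that fin unfolding weight_def by (auto simp: card_gt_0_iff)
    then show ?thesis using weight_flip[OF fin \<open>i \<in> V\<close>, of x] unfolding parity_on_def
      by (cases "x i") auto
  qed
  have "card V * card V \<le> kcost F"
  proof (rule khrapchenko_degree[OF fin_AB nonempty, of F True])
    fix a assume "a \<in> A"
    then show "card V \<le> card {b\<in>B. adj a b}"
      using flip_parity flip_supported by (intro degree_from_flips fin_AB) (auto simp: A_def B_def)
  next
    fix b assume "b \<in> B"
    then show "card V \<le> card {a\<in>A. adj b a}"
      using flip_parity flip_supported by (intro degree_from_flips fin_AB) (auto simp: A_def B_def)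
  qed (use ev in \<open>auto simp: A_def B_def\<close>)
  then show ?thesis by (simp add: power2_eq_square)
qed

lemma square_le_quarter_product: "(m::nat)\<^sup>2 \<le> 4 * ((m div 2 + 1) * (m - m div 2))"
proof -
  define q where "q = m div 2"
  have "m = 2 * q + m mod 2" unfolding q_def by simp
  moreover have "m mod 2 = 0 \<or> m mod 2 = 1" by arith
  ultimately consider "m = 2 * q" | "m = 2 * q + 1" by auto
  then show ?thesis by cases (simp_all add: power2_eq_square algebra_simps)
qed

(* MAJORITY: compare the weight t = |V| div 2 + 1 slice (value 1) with the weight t - 1 slice (value 0);
   the degrees are t and |V| - t + 1. *)
lemma majority_kcost:
  assumes fin: "finite V" and "V \<noteq> {}" and ev: "\<forall>x. eval x F = majority_on V x"
  shows "(card V)\<^sup>2 \<le> 4 * kcost F"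
proof -
  define m where "m = card V"
  define t where "t = m div 2 + 1"
  have "0 < m" using \<open>V \<noteq> {}\<close> fin unfolding m_def by (simp add: card_gt_0_iff)
  then have t: "1 \<le> t" "t \<le> card V" unfolding t_def m_def by presburger+
  define A where "A = {x\<in>supported V. weight V x = t}"
  define B where "B = {x\<in>supported V. weight V x = t - 1}"
  have fin_AB: "finite A" "finite B"
    using finite_supported[OF fin] unfolding A_def B_def by auto
  have "t - 1 \<le> card V" using t by simp
  then obtain b0 where "b0 \<in> supported V" "weight V b0 = t - 1" using exists_weight[OF fin] by blast
  moreover obtain a0 where "a0 \<in> supported V" "weight V a0 = t" using exists_weight[OF fin t(2)] .
  ultimately have nonempty: "A \<noteq> {}" "B \<noteq> {}" unfolding A_def B_def by auto
  have "t * (m - (t - 1)) \<le> kcost F"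
  proof (rule khrapchenko_degree[OF fin_AB nonempty, of F True])
    fix a assume "a \<in> A"
    then show "t \<le> card {b\<in>B. adj a b}"
      using degree_down[OF fin _ fin_AB(2), of a] unfolding A_def B_def by auto
  next
    fix b assume "b \<in> B"
    then show "m - (t - 1) \<le> card {a\<in>A. adj b a}"
      using degree_up[OF fin _ fin_AB(1), of b] t unfolding A_def B_def m_def by auto
  qed (use ev in \<open>auto simp: A_def B_def majority_on_def t_def m_def\<close>)
  then show ?thesis
    using square_le_quarter_product[of m] unfolding t_def m_def by simp
qed

lemma parity_on_pair:
  assumes "finite V" "i \<in> V" "j \<in> V" "i \<noteq> j"
  shows "parity_on V (x(j := \<not> v, i := v)) \<longleftrightarrow> \<not> parity_on (V - {i, j}) x"
  using weight_pair[OF assms] by (simp add: parity_on_def)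

lemma majority_on_pair:
  assumes "finite V" "i \<in> V" "j \<in> V" "i \<noteq> j"
  shows "majority_on V (x(j := \<not> v, i := v)) \<longleftrightarrow> majority_on (V - {i, j}) x"
proof -
  have "card {i, j} \<le> card V" using assms by (intro card_mono) auto
  then have "card V = card (V - {i, j}) + 2" using card_remove_pair[OF assms] assms(4) by simp
  then show ?thesis by (simp add: majority_on_def weight_pair[OF assms])
qed

lemma parity_gates:
  assumes "finite V" "vars F \<subseteq> V" "\<forall>x. eval x F = parity_on V x"
  shows "(card V)\<^sup>2 \<le> 32 * gates F + 32 * card V"
proof (rule quadratic_lower_bound[where P = "\<lambda>V f. f = parity_on V \<or> f = (\<lambda>x. \<not> parity_on V x)"])
  fix V f i j v
  assume "finite V" "f = parity_on V \<or> f = (\<lambda>x. \<not> parity_on V x)" "i \<in> V" "j \<in> V" "i \<noteq> j"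
  then show "(\<lambda>x. f (x(j := \<not> v, i := v))) = parity_on (V - {i, j})
      \<or> (\<lambda>x. f (x(j := \<not> v, i := v))) = (\<lambda>x. \<not> parity_on (V - {i, j}) x)"
    using parity_on_pair by auto
next
  fix V f G
  assume V: "finite V" "V \<noteq> {}" and f: "f = parity_on V \<or> f = (\<lambda>x. \<not> parity_on V x)"
    and G: "\<forall>x. eval x G = f x"
  from f consider "\<forall>x. eval x G = parity_on V x" | "\<forall>x. eval x (Neg G) = parity_on V x"
    using G by auto
  then have "(card V)\<^sup>2 \<le> kcost G"
    by cases (use parity_kcost[OF V] kcost_Neg in metis)+
  then show "(card V)\<^sup>2 \<le> 4 * kcost G" by simp
qed (use assms in auto)

lemma majority_gates:
  assumes "finite V" "vars F \<subseteq> V" "\<forall>x. eval x F = majority_on V x"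
  shows "(card V)\<^sup>2 \<le> 32 * gates F + 32 * card V"
proof (rule quadratic_lower_bound[where P = "\<lambda>V f. f = majority_on V"])
  fix V f i j v
  assume "finite V" "f = majority_on V" "i \<in> V" "j \<in> V" "i \<noteq> j"
  then show "(\<lambda>x. f (x(j := \<not> v, i := v))) = majority_on (V - {i, j})"
    using majority_on_pair by auto
qed (use assms majority_kcost in auto)

lemma quadratic_to_real:
  fixes n g :: nat
  assumes "n\<^sup>2 \<le> 32 * g + 32 * n" "64 \<le> n"
  shows "1 / 64 * real n ^ 2 \<le> real g"
proof -
  have "64 * n \<le> n * n" using assms(2) by (rule mult_le_mono1)
  moreover have "n * n \<le> 32 * g + 32 * n" using assms(1) by (simp only: power2_eq_square)
  ultimately have "n\<^sup>2 \<le> 64 * g" unfolding power2_eq_square by linarith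
  then have "real (n\<^sup>2) \<le> real (64 * g)" by (simp only: of_nat_le_iff)
  then show ?thesis by simp
qed

theorem mainTheorem14:
  shows "(\<exists>c::real. c > 0 \<and> (\<exists>N. \<forall>n \<ge> N. \<forall>F.
            computes n (parity n) F \<longrightarrow> real (gates F) \<ge> c * real n ^ 2))
       \<and> (\<exists>c::real. c > 0 \<and> (\<exists>N. \<forall>n \<ge> N. \<forall>F.
            computes n (majority n) F \<longrightarrow> real (gates F) \<ge> c * real n ^ 2))"
proof (intro conjI exI[of _ "1/64"] exI[of _ "64::nat"] allI impI)
  fix n :: nat and F assume "64 \<le> n" "computes n (parity n) F"
  then have "n\<^sup>2 \<le> 32 * gates F + 32 * n"
    using parity_gates[of "{..<n}" F] by (simp add: computes_def parity_eq)
  then show "1 / 64 * real n ^ 2 \<le> real (gates F)" using \<open>64 \<le> n\<close> by (rule quadratic_to_real)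
next
  fix n :: nat and F assume "64 \<le> n" "computes n (majority n) F"
  then have "n\<^sup>2 \<le> 32 * gates F + 32 * n"
    using majority_gates[of "{..<n}" F] by (simp add: computes_def majority_eq)
  then show "1 / 64 * real n ^ 2 \<le> real (gates F)" using \<open>64 \<le> n\<close> by (rule quadratic_to_real)
qed simp_all

end
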